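(* Let $A,B\in\mathcal A_n$. Then $A\le B$ in ASM order if and only if there is a directed path from $A$ to $B$ in the ASM graph $(\mathcal A_n,\to)$.
   Context: An $n\times n$ matrix $A=(a_{ij})$ is an alternating sign matrix (ASM) if all $a_{ij}\in\{-1,0,1\}$, all partial row sums $\sum_{k\le j}a_{ik}$ and partial column sums $\sum_{k\le i}a_{kj}$ lie in $\{0,1\}$, and every full row sum and column sum equals $1$; $\mathcal A_n$ is the set of $n\times n$ ASMs. The corner sum matrix is $\widetilde A(i,j)=\sum_{p\le i,q\le j}a_{pq}$, with $\widetilde A(i,j)=0$ if $i=0$ or $j=0$. ASM order: $A\le B$ iff $\widetilde A(i,j)\ge\widetilde B(i,j)$ for all $i,j\in[n]$. For $i<j$, $k<l$ in $[n]$, $R_{ij}^{kl}=\{(p,q): i\le p<j,\ k\le q<l\}$ and $\widetilde R_{ij}^{kl}$ is the $0/1$ indicator matrix of $R_{ij}^{kl}$. $E(A)$ (essential rectangles): those $R_{ij}^{kl}$ with, for all $(p,q)\in R_{ij}^{kl}$, $\widetilde A(p,k)=\widetilde A(p,k-1)$, $\widetilde A(p,l)=\widetilde A(p,l-1)+1$, $\widetilde A(i,q)=\widetilde A(i-1,q)$, $\widetilde A(j,q)=\widetilde A(j-1,q)+1$. $E^*(A)$ (dual essential rectangles): those with $\widetilde A(p,k)=\widetilde A(p,k-1)+1$, $\widetilde A(p,l)=\widetilde A(p,l-1)$, $\widetilde A(i,q)=\widetilde A(i-1,q)+1$, $\widetilde A(j,q)=\widetilde A(j-1,q)$. The operator $r_{ij}^{kl}$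 sends $A$ to the ASM with corner sum matrix $\widetilde A+\widetilde R_{ij}^{kl}$ if $R_{ij}^{kl}\in E(A)$, $\widetilde A-\widetilde R_{ij}^{kl}$ if $R_{ij}^{kl}\in E^*(A)$, $\widetilde A$ otherwise. The bigrassmannian statistic is $\beta(A)=\sum_{i,j=1}^n\min(i,j)-\sum_{i,j=1}^n\widetilde A(i,j)$. ASM graph: directed edge $A\to B$ (labelled $(i,j,k,l)$, written $A\xrightarrow{ij,kl}B$) if $B=r_{ij}^{kl}(A)$ and $\beta(A)<\beta(B)$. *)

theory Defs
  imports Main
begin

text \<open>An n x n integer matrix is represented as a function nat => nat => int,
  with rows and columns indexed by 1..n; entries outside [1..n]x[1..n] are required to be 0.\<close>

type_synonym imat = "nat \<Rightarrow> nat \<Rightarrow> int"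

definition is_ASM :: "nat \<Rightarrow> imat \<Rightarrow> bool" where
  "is_ASM n A \<longleftrightarrow>
     (\<forall>i j. (i \<notin> {1..n} \<or> j \<notin> {1..n}) \<longrightarrow> A i j = 0) \<and>
     (\<forall>i\<in>{1..n}. \<forall>j\<in>{1..n}. A i j \<in> {-1, 0, 1}) \<and>
     (\<forall>i\<in>{1..n}. \<forall>j\<in>{1..n}. (\<Sum>k=1..j. A i k) \<in> {0, 1}) \<and>
     (\<forall>i\<in>{1..n}. \<forall>j\<in>{1..n}. (\<Sum>k=1..i. A k j) \<in> {0, 1}) \<and>
     (\<forall>i\<in>{1..n}. (\<Sum>k=1..n. A i k) = 1) \<and>
     (\<forall>j\<in>{1..n}. (\<Sum>k=1..n. A k j) = 1)"

definition csum :: "imat \<Rightarrow> nat \<Rightarrow> nat \<Rightarrow> int" where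
  "csum A i j = (\<Sum>p=1..i. \<Sum>q=1..j. A p q)"

definition asm_le :: "nat \<Rightarrow> imat \<Rightarrow> imat \<Rightarrow> bool" where
  "asm_le n A B \<longleftrightarrow> (\<forall>i\<in>{1..n}. \<forall>j\<in>{1..n}. csum A i j \<ge> csum B i j)"

definition rect :: "nat \<Rightarrow> nat \<Rightarrow> nat \<Rightarrow> nat \<Rightarrow> (nat \<times> nat) set" where
  "rect i j k l = {(p, q). i \<le> p \<and> p < j \<and> k \<le> q \<and> q < l}"

definition rect_ind :: "nat \<Rightarrow> nat \<Rightarrow> nat \<Rightarrow> nat \<Rightarrow> nat \<Rightarrow> nat \<Rightarrow> int" where
  "rect_ind i j k l p q = (if (p, q) \<in> rect i j k l then 1 else 0)"

definition valid_rect :: "nat \<Rightarrow> nat \<Rightarrow> nat \<Rightarrow> nat \<Rightarrow> nat \<Rightarrow> bool" where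
  "valid_rect n i j k l \<longleftrightarrow> i < j \<and> k < l \<and> i \<in> {1..n} \<and> j \<in> {1..n} \<and> k \<in> {1..n} \<and> l \<in> {1..n}"

definition essential :: "nat \<Rightarrow> imat \<Rightarrow> nat \<Rightarrow> nat \<Rightarrow> nat \<Rightarrow> nat \<Rightarrow> bool" where
  "essential n A i j k l \<longleftrightarrow> valid_rect n i j k l \<and>
     (\<forall>(p, q)\<in>rect i j k l.
        csum A p k = csum A p (k - 1) \<and>
        csum A p l = csum A p (l - 1) + 1 \<and>
        csum A i q = csum A (i - 1) q \<and>
        csum A j q = csum A (j - 1) q + 1)"

definition dual_essential :: "nat \<Rightarrow> imat \<Rightarrow> nat \<Rightarrow> nat \<Rightarrow> nat \<Rightarrow> nat \<Rightarrow> bool" where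
  "dual_essential n A i j k l \<longleftrightarrow> valid_rect n i j k l \<and>
     (\<forall>(p, q)\<in>rect i j k l.
        csum A p k = csum A p (k - 1) + 1 \<and>
        csum A p l = csum A p (l - 1) \<and>
        csum A i q = csum A (i - 1) q + 1 \<and>
        csum A j q = csum A (j - 1) q)"

text \<open>The matrix (supported on [n]x[n]) whose corner sum matrix is C (assuming C vanishes on
  row/column 0).\<close>
definition from_csum :: "nat \<Rightarrow> (nat \<Rightarrow> nat \<Rightarrow> int) \<Rightarrow> imat" where
  "from_csum n C p q =
     (if p \<in> {1..n} \<and> q \<in> {1..n}
      then C p q - C (p - 1) q - C p (q - 1) + C (p - 1) (q - 1) else 0)"

definition r_op :: "nat \<Rightarrow> nat \<Rightarrow> nat \<Rightarrow> nat \<Rightarrow> nat \<Rightarrow> imat \<Rightarrow> imat" where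
  "r_op n i j k l A =
     (if essential n A i j k l then from_csum n (\<lambda>p q. csum A p q + rect_ind i j k l p q)
      else if dual_essential n A i j k l then from_csum n (\<lambda>p q. csum A p q - rect_ind i j k l p q)
      else A)"

definition beta :: "nat \<Rightarrow> imat \<Rightarrow> int" where
  "beta n A = (\<Sum>i=1..n. \<Sum>j=1..n. int (min i j)) - (\<Sum>i=1..n. \<Sum>j=1..n. csum A i j)"

definition asm_edge :: "nat \<Rightarrow> imat \<Rightarrow> imat \<Rightarrow> bool" where
  "asm_edge n A B \<longleftrightarrow> is_ASM n A \<and> is_ASM n B \<and>
     (\<exists>i j k l. valid_rect n i j k l \<and> B = r_op n i j k l A \<and> beta n A < beta n B)"

end

theory Submission
  imports Defs
begin

text \<open>Corner sum matrices of n x n ASMs are exactly the integer arrays C on [0..n]x[0..n] with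
  C p 0 = C 0 q = 0, C p n = p, C n q = q, whose steps along rows and columns are 0 or 1.
  An edge adds or subtracts a rectangle indicator to the corner sum matrix; adding one would lower
  the bigrassmannian statistic, so every edge subtracts one and goes up in ASM order.
  Conversely, if A < B pick, among the cells where the corner sum of A exceeds that of B, one
  minimising i + j - 2 csum A i j. Minimality forces csum A to have a peak there: it rises by 1 into
  (i,j) from the cell above and from the cell to the left, and stays flat towards the next row and
  column. The one-cell rectangle at (i,j) is then dual essential, and lowering csum A there is an
  edge to an ASM that is still below B, with statistic one larger; induct on the statistic gap.\<close>

lemma csum_0_left [simp]: "csum A 0 q = 0"
  by (simp add: csum_def)

lemma csum_0_right [simp]: "csum A p 0 = 0"
  by (simp add: csum_def)

lemma csum_Suc_row: "csum A (Suc p) q = csum A p q + (\<Sum>k=1..q. A (Suc p) k)"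
  unfolding csum_def by simp

lemma csum_Suc_col: "csum A p (Suc q) = csum A p q + (\<Sum>k=1..p. A k (Suc q))"
  unfolding csum_def by (simp add: sum.distrib)

definition is_ASM_csum :: "nat \<Rightarrow> (nat \<Rightarrow> nat \<Rightarrow> int) \<Rightarrow> bool" where
  "is_ASM_csum n C \<longleftrightarrow>
     (\<forall>p. C p 0 = 0) \<and> (\<forall>q. C 0 q = 0) \<and>
     (\<forall>p\<le>n. C p n = int p) \<and> (\<forall>q\<le>n. C n q = int q) \<and>
     (\<forall>p q. 1 \<le> p \<longrightarrow> p \<le> n \<longrightarrow> q \<le> n \<longrightarrow> C p q - C (p - 1) q \<in> {0, 1}) \<and>
     (\<forall>p q. p \<le> n \<longrightarrow> 1 \<le> q \<longrightarrow> q \<le> n \<longrightarrow> C p q - C p (q - 1) \<in> {0, 1})"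

lemma is_ASM_csum_transpose: "is_ASM_csum n (\<lambda>p q. C q p) \<longleftrightarrow> is_ASM_csum n C"
  unfolding is_ASM_csum_def by blast

lemma is_ASM_csum_csum:
  assumes A: "is_ASM n A"
  shows "is_ASM_csum n (csum A)"
proof -
  have last_col: "csum A p n = int p" if "p \<le> n" for p
    using that by (induction p) (use A in \<open>simp_all add: csum_Suc_row is_ASM_def\<close>)
  have last_row: "csum A n q = int q" if "q \<le> n" for q
    using that by (induction q) (use A in \<open>simp_all add: csum_Suc_col is_ASM_def\<close>)
  have row_step: "csum A p q - csum A (p - 1) q \<in> {0, 1}" if "1 \<le> p" "p \<le> n" "q \<le> n" for p q
  proof (cases "q = 0")
    case False
    obtain p' where "p = Suc p'" using \<open>1 \<le> p\<close> by (cases p) auto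
    with A that False show ?thesis by (simp add: csum_Suc_row is_ASM_def)
  qed simp
  have col_step: "csum A p q - csum A p (q - 1) \<in> {0, 1}" if "p \<le> n" "1 \<le> q" "q \<le> n" for p q
  proof (cases "p = 0")
    case False
    obtain q' where "q = Suc q'" using \<open>1 \<le> q\<close> by (cases q) auto
    with A that False show ?thesis by (simp add: csum_Suc_col is_ASM_def)
  qed simp
  show ?thesis
    unfolding is_ASM_csum_def using last_col last_row row_step col_step by simp
qed

lemma row_sum_from_csum:
  assumes "1 \<le> p" "p \<le> n" "q \<le> n" "C p 0 = 0" "C (p - 1) 0 = 0"
  shows "(\<Sum>k=1..q. from_csum n C p k) = C p q - C (p - 1) q"
  using assms(3) by (induction q) (use assms in \<open>simp_all add: from_csum_def\<close>)

lemma col_sum_from_csum: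
  assumes "1 \<le> q" "q \<le> n" "p \<le> n" "C 0 q = 0" "C 0 (q - 1) = 0"
  shows "(\<Sum>k=1..p. from_csum n C k q) = C p q - C p (q - 1)"
  using assms(3) by (induction p) (use assms in \<open>simp_all add: from_csum_def\<close>)

lemma csum_from_csum:
  assumes "\<forall>p. C p 0 = 0" "\<forall>q. C 0 q = 0" "p \<le> n" "q \<le> n"
  shows "csum (from_csum n C) p q = C p q"
  using assms(3)
proof (induction p)
  case (Suc p)
  then show ?case
    using row_sum_from_csum[of "Suc p" n q C] assms by (simp add: csum_Suc_row)
qed (simp add: assms)

lemma from_csum_csum:
  assumes "is_ASM n A"
  shows "from_csum n (csum A) = A"
proof (intro ext)
  fix p q
  show "from_csum n (csum A) p q = A p q"
  proof (cases "p \<in> {1..n} \<and> q \<in> {1..n}")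
    case True
    then obtain p' q' where "p = Suc p'" "q = Suc q'"
      by (cases p; cases q) auto
    with True show ?thesis by (simp add: from_csum_def csum_Suc_row)
  next
    case False
    with assms show ?thesis by (auto simp: from_csum_def is_ASM_def)
  qed
qed

lemma is_ASM_from_csum:
  assumes C: "is_ASM_csum n C"
  shows "is_ASM n (from_csum n C)"
proof -
  have zero: "\<forall>p. C p 0 = 0" "\<forall>q. C 0 q = 0"
    and last: "\<And>p. p \<le> n \<Longrightarrow> C p n = int p" "\<And>q. q \<le> n \<Longrightarrow> C n q = int q"
    and row_step: "\<And>p q. 1 \<le> p \<Longrightarrow> p \<le> n \<Longrightarrow> q \<le> n \<Longrightarrow> C p q - C (p - 1) q \<in> {0, 1}"
    and col_step: "\<And>p q. p \<le> n \<Longrightarrow> 1 \<le> q \<Longrightarrow> q \<le> n \<Longrightarrow> C p q - C p (q - 1) \<in> {0, 1}"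
    using C by (auto simp: is_ASM_csum_def)
  have entry: "from_csum n C p q \<in> {-1, 0, 1}" if "p \<in> {1..n}" "q \<in> {1..n}" for p q
  proof -
    have "from_csum n C p q = (C p q - C (p - 1) q) - (C p (q - 1) - C (p - 1) (q - 1))"
      using that by (simp add: from_csum_def)
    with that row_step[of p q] row_step[of p "q - 1"] show ?thesis by auto
  qed
  have "(\<Sum>k=1..q. from_csum n C p k) \<in> {0, 1}" if "p \<in> {1..n}" "q \<in> {1..n}" for p q
    using row_sum_from_csum[of p n q C] that zero row_step by auto
  moreover have "(\<Sum>k=1..p. from_csum n C k q) \<in> {0, 1}" if "p \<in> {1..n}" "q \<in> {1..n}" for p q
    using col_sum_from_csum[of q n p C] that zero col_step by auto
  moreover have "(\<Sum>k=1..n. from_csum n C p k) = 1" if "p \<in> {1..n}" for p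
    using row_sum_from_csum[of p n n C] that zero last(1)[of p] last(1)[of "p - 1"]
    by auto
  moreover have "(\<Sum>k=1..n. from_csum n C k q) = 1" if "q \<in> {1..n}" for q
    using col_sum_from_csum[of q n n C] that zero last(2)[of q] last(2)[of "q - 1"]
    by auto
  ultimately show ?thesis
    unfolding is_ASM_def using entry by (auto simp: from_csum_def)
qed

lemma ASM_eqI_csum:
  assumes "is_ASM n A" "is_ASM n B" "\<And>p q. p \<le> n \<Longrightarrow> q \<le> n \<Longrightarrow> csum A p q = csum B p q"
  shows "A = B"
proof -
  have "from_csum n (csum A) = from_csum n (csum B)"
    by (auto simp: fun_eq_iff from_csum_def assms(3))
  with assms(1,2) show ?thesis by (simp add: from_csum_csum)
qed

lemma asm_le_refl: "asm_le n A A"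
  by (simp add: asm_le_def)

lemma asm_le_trans: "asm_le n A B \<Longrightarrow> asm_le n B C \<Longrightarrow> asm_le n A C"
  unfolding asm_le_def by (meson order_trans)

lemma beta_mono: "asm_le n A B \<Longrightarrow> beta n A \<le> beta n B"
  unfolding asm_le_def beta_def by (intro diff_left_mono sum_mono) auto

lemma asm_edge_imp_asm_le:
  assumes "asm_edge n A B"
  shows "asm_le n A B"
proof -
  obtain i j k l where v: "valid_rect n i j k l" and B: "B = r_op n i j k l A"
    and up: "beta n A < beta n B"
    using assms unfolding asm_edge_def by blast
  let ?R = "rect_ind i j k l"
  have R_zero: "\<forall>p. ?R p 0 = 0" "\<forall>q. ?R 0 q = 0"
    using v by (auto simp: rect_ind_def rect_def valid_rect_def)
  have R_nonneg: "0 \<le> ?R p q" for p q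
    by (simp add: rect_ind_def)
  consider "essential n A i j k l"
    | "\<not> essential n A i j k l" "dual_essential n A i j k l"
    | "\<not> essential n A i j k l" "\<not> dual_essential n A i j k l"
    by blast
  then show ?thesis
  proof cases
    case 1
    then have "B = from_csum n (\<lambda>p q. csum A p q + ?R p q)"
      using B by (simp add: r_op_def)
    then have "csum B p q = csum A p q + ?R p q" if "p \<le> n" "q \<le> n" for p q
      using csum_from_csum that R_zero by simp
    then have "asm_le n B A"
      using R_nonneg by (simp add: asm_le_def)
    with up show ?thesis
      using beta_mono by fastforce
  next
    case 2
    then have "B = from_csum n (\<lambda>p q. csum A p q - ?R p q)"
      using B by (simp add: r_op_def)
    then have "csum B p q = csum A p q - ?R p q" if "p \<le> n" "q \<le> n" for p q
      using csum_from_csum that R_zero by simp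
    then show ?thesis
      using R_nonneg by (simp add: asm_le_def)
  next
    case 3
    with B up show ?thesis by (simp add: r_op_def)
  qed
qed

lemma rtranclp_asm_edge_imp_asm_le: "(asm_edge n)\<^sup>*\<^sup>* A B \<Longrightarrow> asm_le n A B"
  by (induction rule: rtranclp_induct) (use asm_le_refl asm_le_trans asm_edge_imp_asm_le in blast)+

definition csum_peak :: "(nat \<Rightarrow> nat \<Rightarrow> int) \<Rightarrow> nat \<Rightarrow> nat \<Rightarrow> bool" where
  "csum_peak C i j \<longleftrightarrow>
     C i j = C (i - 1) j + 1 \<and> C i j = C i (j - 1) + 1 \<and> C (Suc i) j = C i j \<and> C i (Suc j) = C i j"

lemma gap_minimiser_row_peak:
  assumes CA: "is_ASM_csum n CA" and CB: "is_ASM_csum n CB"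
    and gap: "i \<le> n" "j \<le> n" "CB i j < CA i j"
    and min: "\<And>p q. p \<le> n \<Longrightarrow> q \<le> n \<Longrightarrow> CB p q < CA p q \<Longrightarrow>
                int i + int j - 2 * CA i j \<le> int p + int q - 2 * CA p q"
  shows "1 \<le> i \<and> i < n \<and> CA i j = CA (i - 1) j + 1 \<and> CA (Suc i) j = CA i j"
proof -
  have CA_step: "\<And>p q. 1 \<le> p \<Longrightarrow> p \<le> n \<Longrightarrow> q \<le> n \<Longrightarrow> CA p q - CA (p - 1) q \<in> {0, 1}"
    and CB_step: "\<And>p q. 1 \<le> p \<Longrightarrow> p \<le> n \<Longrightarrow> q \<le> n \<Longrightarrow> CB p q - CB (p - 1) q \<in> {0, 1}"
    using CA CB by (auto simp: is_ASM_csum_def)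
  have "CA 0 j = CB 0 j" "CA n j = CB n j"
    using CA CB gap by (simp_all add: is_ASM_csum_def)
  then have "i \<noteq> 0" "i \<noteq> n"
    using gap by (metis less_irrefl)+
  then have i: "1 \<le> i" "i < n"
    using gap by auto
  have rise: "CA i j = CA (i - 1) j + 1"
  proof (rule ccontr)
    assume "\<not> ?thesis"
    then have flat: "CA i j = CA (i - 1) j"
      using CA_step[of i j] i gap by auto
    moreover have "CB (i - 1) j \<le> CB i j"
      using CB_step[of i j] i gap by auto
    ultimately have "int i + int j - 2 * CA i j \<le> int (i - 1) + int j - 2 * CA (i - 1) j"
      using min[of "i - 1" j] gap by auto
    with flat i show False by simp
  qed
  have flat: "CA (Suc i) j = CA i j"
  proof (rule ccontr)
    assume "\<not> ?thesis"
    then have up: "CA (Suc i) j = CA i j + 1"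
      using CA_step[of "Suc i" j] i gap by auto
    moreover have "CB (Suc i) j \<le> CB i j + 1"
      using CB_step[of "Suc i" j] i gap by auto
    ultimately have "int i + int j - 2 * CA i j \<le> int (Suc i) + int j - 2 * CA (Suc i) j"
      using min[of "Suc i" j] gap i by auto
    with up show False by simp
  qed
  from i rise flat show ?thesis by blast
qed

lemma exists_peak_in_gap:
  assumes CA: "is_ASM_csum n CA" and CB: "is_ASM_csum n CB"
    and gap: "\<exists>p\<le>n. \<exists>q\<le>n. CB p q < CA p q"
  obtains i j where "1 \<le> i" "i < n" "1 \<le> j" "j < n" "CB i j < CA i j" "csum_peak CA i j"
proof -
  define S where "S = {(p, q). p \<le> n \<and> q \<le> n \<and> CB p q < CA p q}"
  define \<psi> where "\<psi> = (\<lambda>(p, q). int p + int q - 2 * CA p q)"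
  have "finite S"
    by (rule finite_subset[of _ "{0..n} \<times> {0..n}"]) (auto simp: S_def)
  moreover have "S \<noteq> {}"
    using gap by (auto simp: S_def)
  ultimately have "Min (\<psi> ` S) \<in> \<psi> ` S" "\<And>y. y \<in> S \<Longrightarrow> Min (\<psi> ` S) \<le> \<psi> y"
    by simp_all
  then obtain x where "x \<in> S" and x_min: "\<And>y. y \<in> S \<Longrightarrow> \<psi> x \<le> \<psi> y"
    by force
  then obtain i j where ij: "i \<le> n" "j \<le> n" "CB i j < CA i j"
    and min: "\<And>p q. p \<le> n \<Longrightarrow> q \<le> n \<Longrightarrow> CB p q < CA p q \<Longrightarrow>
                int i + int j - 2 * CA i j \<le> int p + int q - 2 * CA p q"
    unfolding S_def \<psi>_def by (cases x) auto
  have row: "1 \<le> i \<and> i < n \<and> CA i j = CA (i - 1) j + 1 \<and> CA (Suc i) j = CA i j"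
    using gap_minimiser_row_peak[OF CA CB ij min] .
  have min_transposed: "int j + int i - 2 * CA i j \<le> int q + int p - 2 * CA p q"
    if "q \<le> n" "p \<le> n" "CB p q < CA p q" for p q
    using min[OF that(2,1,3)] by linarith
  have col: "1 \<le> j \<and> j < n \<and> CA i j = CA i (j - 1) + 1 \<and> CA i (Suc j) = CA i j"
    using gap_minimiser_row_peak[OF CA[THEN is_ASM_csum_transpose[THEN iffD2]]
        CB[THEN is_ASM_csum_transpose[THEN iffD2]] ij(2,1,3) min_transposed] .
  from row col ij show thesis
    by (intro that[of i j]) (auto simp: csum_peak_def)
qed

lemma rect_ind_cell: "rect_ind i (Suc i) j (Suc j) p q = (if p = i \<and> q = j then 1 else 0)"
  by (auto simp: rect_ind_def rect_def)

lemma is_ASM_csum_lower_peak: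
  assumes C: "is_ASM_csum n C" and peak: "csum_peak C i j"
    and ij: "1 \<le> i" "i < n" "1 \<le> j" "j < n"
  shows "is_ASM_csum n (\<lambda>p q. C p q - rect_ind i (Suc i) j (Suc j) p q)"
proof -
  have zero: "\<forall>p. C p 0 = 0" "\<forall>q. C 0 q = 0"
    and last: "\<forall>p\<le>n. C p n = int p" "\<forall>q\<le>n. C n q = int q"
    and row_step: "\<And>p q. 1 \<le> p \<Longrightarrow> p \<le> n \<Longrightarrow> q \<le> n \<Longrightarrow> C p q - C (p - 1) q \<in> {0, 1}"
    and col_step: "\<And>p q. p \<le> n \<Longrightarrow> 1 \<le> q \<Longrightarrow> q \<le> n \<Longrightarrow> C p q - C p (q - 1) \<in> {0, 1}"
    using C by (auto simp: is_ASM_csum_def)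
  have rise: "C i j = C (i - 1) j + 1" "C i j = C i (j - 1) + 1"
    and flat: "C (Suc i) j = C i j" "C i (Suc j) = C i j"
    using peak by (simp_all add: csum_peak_def)
  show ?thesis
    unfolding is_ASM_csum_def
  proof (intro conjI allI impI)
    fix p q
    assume p: "1 \<le> p" "p \<le> n" and "q \<le> n"
    consider "p = i" "q = j" | "p = Suc i" "q = j" | "(p, q) \<noteq> (i, j)" "(p - 1, q) \<noteq> (i, j)"
      using p by force
    then show "C p q - rect_ind i (Suc i) j (Suc j) p q -
        (C (p - 1) q - rect_ind i (Suc i) j (Suc j) (p - 1) q) \<in> {0, 1}"
    proof cases
      case 1
      with ij rise(1) show ?thesis by (simp add: rect_ind_cell)
    next
      case 2
      with flat(1) show ?thesis by (simp add: rect_ind_cell)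
    next
      case 3
      with row_step[of p q] p \<open>q \<le> n\<close> show ?thesis by (auto simp: rect_ind_cell)
    qed
  next
    fix p q
    assume q: "1 \<le> q" "q \<le> n" and "p \<le> n"
    consider "p = i" "q = j" | "p = i" "q = Suc j" | "(p, q) \<noteq> (i, j)" "(p, q - 1) \<noteq> (i, j)"
      using q by force
    then show "C p q - rect_ind i (Suc i) j (Suc j) p q -
        (C p (q - 1) - rect_ind i (Suc i) j (Suc j) p (q - 1)) \<in> {0, 1}"
    proof cases
      case 1
      with ij rise(2) show ?thesis by (simp add: rect_ind_cell)
    next
      case 2
      with flat(2) show ?thesis by (simp add: rect_ind_cell)
    next
      case 3
      with col_step[of p q] q \<open>p \<le> n\<close> show ?thesis by (auto simp: rect_ind_cell)
    qed
  qed (use zero last ij in \<open>auto simp: rect_ind_cell\<close>)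
qed

lemma asm_edge_lower_peak:
  assumes A: "is_ASM n A" and peak: "csum_peak (csum A) i j"
    and ij: "1 \<le> i" "i < n" "1 \<le> j" "j < n"
  shows "asm_edge n A (from_csum n (\<lambda>p q. csum A p q - rect_ind i (Suc i) j (Suc j) p q))"
    (is "asm_edge n A ?A'")
proof -
  let ?R = "rect_ind i (Suc i) j (Suc j)"
  have valid: "valid_rect n i (Suc i) j (Suc j)"
    using ij by (simp add: valid_rect_def)
  have cell: "rect i (Suc i) j (Suc j) = {(i, j)}"
    by (auto simp: rect_def)
  have "dual_essential n A i (Suc i) j (Suc j)"
    using valid peak by (auto simp: dual_essential_def cell csum_peak_def)
  moreover have "\<not> essential n A i (Suc i) j (Suc j)"
    using peak by (auto simp: essential_def cell csum_peak_def)
  ultimately have r_op: "r_op n i (Suc i) j (Suc j) A = ?A'"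
    by (simp add: r_op_def)
  have ASM: "is_ASM n ?A'"
    by (intro is_ASM_from_csum is_ASM_csum_lower_peak is_ASM_csum_csum A peak ij)
  have "csum ?A' p q = csum A p q - ?R p q" if "p \<le> n" "q \<le> n" for p q
    using csum_from_csum that ij by (simp add: rect_ind_cell)
  then have "(\<Sum>p=1..n. \<Sum>q=1..n. csum ?A' p q) = (\<Sum>p=1..n. \<Sum>q=1..n. csum A p q - ?R p q)"
    by simp
  also have "\<dots> = (\<Sum>p=1..n. \<Sum>q=1..n. csum A p q) - (\<Sum>p=1..n. \<Sum>q=1..n. ?R p q)"
    by (simp add: sum_subtractf)
  also have "(\<Sum>p=1..n. \<Sum>q=1..n. ?R p q) = (\<Sum>p=1..n. if p = i then 1 else 0)"
    using ij by (intro sum.cong) (auto simp: rect_ind_cell)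
  also have "\<dots> = 1"
    using ij by simp
  finally have "beta n A < beta n ?A'"
    by (simp add: beta_def)
  with A ASM valid r_op show ?thesis
    unfolding asm_edge_def by metis
qed

lemma asm_le_step:
  assumes A: "is_ASM n A" and B: "is_ASM n B" and le: "asm_le n A B" and "A \<noteq> B"
  obtains A' where "asm_edge n A A'" "asm_le n A' B"
proof -
  have csum_le: "csum B p q \<le> csum A p q" if "p \<le> n" "q \<le> n" for p q
    using le that unfolding asm_le_def by (cases "p = 0"; cases "q = 0") auto
  have "\<exists>p\<le>n. \<exists>q\<le>n. csum B p q < csum A p q"
  proof (rule ccontr)
    assume "\<not> ?thesis"
    then have "csum A p q = csum B p q" if "p \<le> n" "q \<le> n" for p q
      using csum_le that by force
    with A B \<open>A \<noteq> B\<close> show False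
      using ASM_eqI_csum by blast
  qed
  then obtain i j where ij: "1 \<le> i" "i < n" "1 \<le> j" "j < n"
    and gap: "csum B i j < csum A i j" and peak: "csum_peak (csum A) i j"
    using exists_peak_in_gap[OF is_ASM_csum_csum[OF A] is_ASM_csum_csum[OF B]] by blast
  let ?A' = "from_csum n (\<lambda>p q. csum A p q - rect_ind i (Suc i) j (Suc j) p q)"
  have "csum ?A' p q = csum A p q - rect_ind i (Suc i) j (Suc j) p q" if "p \<le> n" "q \<le> n" for p q
    using csum_from_csum that ij by (simp add: rect_ind_cell)
  then have "asm_le n ?A' B"
    using csum_le gap by (auto simp: asm_le_def rect_ind_cell)
  with asm_edge_lower_peak[OF A peak ij] show thesis
    by (rule that)
qed

lemma asm_le_imp_rtranclp_asm_edge: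
  assumes "is_ASM n A" "is_ASM n B" "asm_le n A B"
  shows "(asm_edge n)\<^sup>*\<^sup>* A B"
  using assms
proof (induction "nat (beta n B - beta n A)" arbitrary: A rule: less_induct)
  case less
  show ?case
  proof (cases "A = B")
    case False
    then obtain A' where edge: "asm_edge n A A'" and le: "asm_le n A' B"
      using asm_le_step less.prems by blast
    have "beta n A < beta n A'" "beta n A' \<le> beta n B"
      using edge le beta_mono by (auto simp: asm_edge_def)
    moreover have "is_ASM n A'"
      using edge by (simp add: asm_edge_def)
    ultimately have "(asm_edge n)\<^sup>*\<^sup>* A' B"
      using less.hyps less.prems(2) le by simp
    with edge show ?thesis
      by (rule converse_rtranclp_into_rtranclp)
  qed simp
qed

theorem mainTheorem3:
  fixes n :: nat and A B :: imat
  assumes "is_ASM n A" and "is_ASM n B"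
  shows "asm_le n A B \<longleftrightarrow> (asm_edge n)\<^sup>*\<^sup>* A B"
  using asm_le_imp_rtranclp_asm_edge[OF assms] rtranclp_asm_edge_imp_asm_le by blast

end
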